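(* Let $H$ be a real Hilbert space and let $A_1,A_2,\dots,A_k$ be non-empty, convex and closed subsets of $H$. Then for every $r>0$ the set $$F_r=\{\alpha\in[0,1]:P_{A_k}^\alpha P_{A_{k-1}}^\alpha\cdots P_{A_1}^\alpha\text{ has a fixed point }x\text{ with }\|x\|\leq r\}$$ is closed in $[0,1]$.
   Context: For a non-empty, convex, closed subset $A$ of a real Hilbert space $H$, $P_A:H\to A$ denotes the metric (nearest-point) projection onto $A$. For $\alpha\in[0,1]$, the $\alpha$-relaxed projection onto $A$ is the map $P_A^\alpha:H\to H$, $P_A^\alpha(x)=\alpha P_A(x)+(1-\alpha)x$. Compositions are written as products. *)

theory Defs
  imports "HOL-Analysis.Analysis"
begin

text \<open>For non-empty closed convex sets the
  nearest point exists and is unique, so this choice is the projection.\<close>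
definition metric_proj :: "'a::{real_inner,complete_space} set \<Rightarrow> 'a \<Rightarrow> 'a" where
  "metric_proj A x = (SOME p. p \<in> A \<and> (\<forall>y\<in>A. dist x p \<le> dist x y))"

definition relaxed_proj :: "'a::{real_inner,complete_space} set \<Rightarrow> real \<Rightarrow> 'a \<Rightarrow> 'a" where
  "relaxed_proj A \<alpha> x = \<alpha> *\<^sub>R metric_proj A x + (1 - \<alpha>) *\<^sub>R x"

fun relaxed_comp :: "(nat \<Rightarrow> 'a::{real_inner,complete_space} set) \<Rightarrow> nat \<Rightarrow> real \<Rightarrow> 'a \<Rightarrow> 'a" where
  "relaxed_comp A 0 \<alpha> = id"
| "relaxed_comp A (Suc n) \<alpha> = relaxed_proj (A (Suc n)) \<alpha> \<circ> relaxed_comp A n \<alpha>"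

end

theory Submission
  imports Defs
begin

(* If alpha_n -> alpha and x_n = T_{alpha_n} x_n with ||x_n|| <= r, then
   ||T_alpha x_n - x_n|| <= L |alpha - alpha_n| -> 0 because T depends Lipschitz-
   continuously on the parameter; so (x_n) is a bounded approximate fixed-point
   sequence of the nonexpansive map T_alpha, and the demiclosedness principle yields a
   fixed point of T_alpha in the ball.  Demiclosedness is proved without weak
   compactness, via the asymptotic centre of (x_n): the unique minimizer of
   y |-> limsup ||x_n - y||^2, which both T_alpha and the projection onto the ball fix. *)

definition real_limsup :: "(nat \<Rightarrow> real) \<Rightarrow> real" where
  "real_limsup a = real_of_ereal (limsup (\<lambda>n. ereal (a n)))"

lemma real_limsup_ereal:
  assumes "Bseq a"
  shows "limsup (\<lambda>n. ereal (a n)) = ereal (real_limsup a)"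
proof -
  obtain K where K: "\<And>n. \<bar>a n\<bar> \<le> K" using assms unfolding Bseq_def by auto
  have "limsup (\<lambda>n. ereal (a n)) \<le> ereal K"
    by (rule Limsup_bounded) (use K abs_le_D1 in \<open>auto intro!: always_eventually\<close>)
  moreover have "ereal (-K) \<le> limsup (\<lambda>n. ereal (a n))"
    by (rule le_Limsup) (use K in \<open>auto intro!: always_eventually simp: abs_le_iff minus_le_iff\<close>)
  ultimately have "\<bar>limsup (\<lambda>n. ereal (a n))\<bar> \<noteq> \<infinity>" by auto
  then show ?thesis unfolding real_limsup_def by (simp add: ereal_real')
qed

lemma Bseq_add_seq:
  fixes a b :: "nat \<Rightarrow> 'a::real_normed_vector"
  assumes "Bseq a" "Bseq b"
  shows "Bseq (\<lambda>n. a n + b n)"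
proof -
  obtain K L where "\<And>n. norm (a n) \<le> K" "\<And>n. norm (b n) \<le> L"
    using assms unfolding Bseq_def by auto
  then have "norm (a n + b n) \<le> K + L" for n by (meson add_mono norm_triangle_le)
  then show ?thesis by (rule BseqI')
qed

lemma real_limsup_mono:
  assumes "Bseq a" "Bseq b" "\<And>n. a n \<le> b n"
  shows "real_limsup a \<le> real_limsup b"
proof -
  have "limsup (\<lambda>n. ereal (a n)) \<le> limsup (\<lambda>n. ereal (b n))"
    by (rule Limsup_mono) (use assms in auto)
  then show ?thesis using real_limsup_ereal[OF assms(1)] real_limsup_ereal[OF assms(2)] by simp
qed

lemma real_limsup_add:
  assumes "Bseq a" "Bseq b"
  shows "real_limsup (\<lambda>n. a n + b n) \<le> real_limsup a + real_limsup b"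
proof -
  have "limsup (\<lambda>n. ereal (a n) + ereal (b n))
      \<le> limsup (\<lambda>n. ereal (a n)) + limsup (\<lambda>n. ereal (b n))"
    by (rule ereal_limsup_add_mono)
  then show ?thesis
    using real_limsup_ereal[OF assms(1)] real_limsup_ereal[OF assms(2)]
      real_limsup_ereal[OF Bseq_add_seq[OF assms]] by simp
qed

lemma real_limsup_tendsto:
  assumes "a \<longlonglongrightarrow> l"
  shows "real_limsup a = l"
proof -
  have "(\<lambda>n. ereal (a n)) \<longlonglongrightarrow> ereal l" using assms by simp
  then have "limsup (\<lambda>n. ereal (a n)) = ereal l"
    by (rule lim_imp_Limsup[OF trivial_limit_sequentially])
  then show ?thesis unfolding real_limsup_def by simp
qed

lemma real_limsup_cmult:
  assumes "Bseq a" "c > 0"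
  shows "real_limsup (\<lambda>n. c * a n) = c * real_limsup a"
proof -
  have "limsup (\<lambda>n. ereal c * ereal (a n)) = ereal c * limsup (\<lambda>n. ereal (a n))"
    by (rule ereal_limsup_lim_mult) (use assms in auto)
  then show ?thesis unfolding real_limsup_def using real_limsup_ereal[OF assms(1)] by simp
qed

lemma real_limsup_add_const:
  assumes "Bseq a"
  shows "real_limsup (\<lambda>n. a n + c) \<le> real_limsup a + c"
  using real_limsup_add[OF assms Bfun_const] real_limsup_tendsto[OF tendsto_const] by simp

lemma midpoint_sq_dist:
  fixes x y z :: "'a::real_inner"
  shows "(norm (x - ((1/2) *\<^sub>R y + (1/2) *\<^sub>R z)))\<^sup>2
     = (norm (x - y))\<^sup>2 / 2 + (norm (x - z))\<^sup>2 / 2 - (norm (y - z))\<^sup>2 / 4"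
  by (simp add: power2_norm_eq_inner inner_diff_left inner_diff_right inner_add_left
      inner_add_right inner_commute field_simps)

(* phi is strongly midpoint convex on C (with modulus 1/4 * dist^2); both the
   squared distance to a point and the asymptotic function below have this property. *)
definition strongly_midpoint_convex_on :: "'a::real_normed_vector set \<Rightarrow> ('a \<Rightarrow> real) \<Rightarrow> bool" where
  "strongly_midpoint_convex_on C \<phi> \<longleftrightarrow> (\<forall>y\<in>C. \<forall>z\<in>C.
     \<phi> ((1/2) *\<^sub>R y + (1/2) *\<^sub>R z) \<le> (\<phi> y + \<phi> z) / 2 - (norm (y - z))\<^sup>2 / 4)"

(* A minimizing sequence of a strongly midpoint convex function is Cauchy:
   two almost-minimizers have an almost-minimizing midpoint, hence are close. *)
lemma strongly_midpoint_convex_minimizing_Cauchy: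
  fixes \<phi> :: "'a::real_normed_vector \<Rightarrow> real"
  assumes smc: "strongly_midpoint_convex_on C \<phi>" and cv: "convex C"
    and YC: "\<And>n. Y n \<in> C" and lower: "\<And>y. y \<in> C \<Longrightarrow> d \<le> \<phi> y"
    and Yd: "\<And>n. \<phi> (Y n) \<le> d + 1 / (real n + 1)"
  shows "Cauchy Y"
proof (rule metric_CauchyI)
  have close: "(norm (Y m - Y n))\<^sup>2 \<le> 2 / (real m + 1) + 2 / (real n + 1)" for m n
  proof -
    have "(1/2) *\<^sub>R Y m + (1/2) *\<^sub>R Y n \<in> C"
      using convexD[OF cv YC YC, of "1/2" "1/2"] by simp
    then have "d \<le> \<phi> ((1/2) *\<^sub>R Y m + (1/2) *\<^sub>R Y n)" by (rule lower)
    also have "\<dots> \<le> (\<phi> (Y m) + \<phi> (Y n)) / 2 - (norm (Y m - Y n))\<^sup>2 / 4"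
      using smc YC unfolding strongly_midpoint_convex_on_def by blast
    finally have "d \<le> (\<phi> (Y m) + \<phi> (Y n)) / 2 - (norm (Y m - Y n))\<^sup>2 / 4" .
    moreover have "2 / (real m + 1) = 2 * (1 / (real m + 1))" "2 / (real n + 1) = 2 * (1 / (real n + 1))"
      by simp_all
    ultimately show ?thesis using Yd[of m] Yd[of n] by argo
  qed
  fix e :: real assume "e > 0"
  then obtain M where M: "inverse (real (Suc M)) < e\<^sup>2 / 4"
    using reals_Archimedean[of "e\<^sup>2 / 4"] by auto
  show "\<exists>M. \<forall>m\<ge>M. \<forall>n\<ge>M. dist (Y m) (Y n) < e"
  proof (intro exI allI impI)
    fix m n assume "M \<le> m" "M \<le> n"
    then have "2 / (real m + 1) \<le> 2 * inverse (real (Suc M))" "2 / (real n + 1) \<le> 2 * inverse (real (Suc M))"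
      by (simp_all add: divide_simps)
    with close[of m n] M have "(dist (Y m) (Y n))\<^sup>2 < e\<^sup>2" by (simp add: dist_norm)
    with \<open>e > 0\<close> show "dist (Y m) (Y n) < e" by (simp add: power_less_imp_less_base)
  qed
qed

lemma strongly_midpoint_convex_min_exists:
  fixes \<phi> :: "'a::{real_normed_vector,complete_space} \<Rightarrow> real"
  assumes smc: "strongly_midpoint_convex_on C \<phi>" and cv: "convex C" and cl: "closed C"
    and ne: "C \<noteq> {}" and ct: "continuous_on C \<phi>" and bdd: "bdd_below (\<phi> ` C)"
  shows "\<exists>c\<in>C. \<forall>y\<in>C. \<phi> c \<le> \<phi> y"
proof -
  define d where "d = Inf (\<phi> ` C)"
  have lower: "\<And>y. y \<in> C \<Longrightarrow> d \<le> \<phi> y" unfolding d_def using bdd by (auto intro: cInf_lower)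
  have "\<exists>y\<in>C. \<phi> y < d + 1 / (real n + 1)" for n
    using cInf_lessD[of "\<phi> ` C" "d + 1 / (real n + 1)"] ne unfolding d_def by auto
  then obtain Y where YC: "\<And>n. Y n \<in> C" and Yd: "\<And>n. \<phi> (Y n) < d + 1 / (real n + 1)"
    by metis
  have Yd': "\<phi> (Y n) \<le> d + 1 / (real n + 1)" for n using Yd[of n] by simp
  have "Cauchy Y"
    using smc cv YC lower Yd' by (rule strongly_midpoint_convex_minimizing_Cauchy)
  then obtain c where Yc: "Y \<longlonglongrightarrow> c" using convergent_eq_Cauchy by blast
  have cC: "c \<in> C" using closed_sequentially[OF cl] YC Yc by blast
  have "(\<lambda>n. \<phi> (Y n)) \<longlonglongrightarrow> \<phi> c"
    using continuous_on_tendsto_compose[OF ct Yc cC] YC by auto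
  moreover have "(\<lambda>n. \<phi> (Y n)) \<longlonglongrightarrow> d"
  proof (rule tendsto_sandwich[of "\<lambda>n. d" _ _ "\<lambda>n. d + 1 / (real n + 1)"])
    show "\<forall>\<^sub>F n in sequentially. d \<le> \<phi> (Y n)"
      using lower YC by (auto intro!: always_eventually)
    show "\<forall>\<^sub>F n in sequentially. \<phi> (Y n) \<le> d + 1 / (real n + 1)"
      using Yd' by (auto intro!: always_eventually)
    show "(\<lambda>n. d + 1 / (real n + 1)) \<longlonglongrightarrow> d"
      using tendsto_add[OF tendsto_const LIMSEQ_inverse_real_of_nat]
      by (simp add: inverse_eq_divide add.commute)
  qed simp
  ultimately have "\<phi> c = d" using LIMSEQ_unique by blast
  then show ?thesis using cC lower by auto
qed

lemma strongly_midpoint_convex_min_unique: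
  fixes \<phi> :: "'a::real_normed_vector \<Rightarrow> real"
  assumes smc: "strongly_midpoint_convex_on C \<phi>" and cv: "convex C"
    and c: "c \<in> C" "\<And>z. z \<in> C \<Longrightarrow> \<phi> c \<le> \<phi> z" and y: "y \<in> C" "\<phi> y \<le> \<phi> c"
  shows "y = c"
proof -
  have "(1/2) *\<^sub>R y + (1/2) *\<^sub>R c \<in> C" using convexD[OF cv y(1) c(1), of "1/2" "1/2"] by simp
  then have "\<phi> c \<le> \<phi> ((1/2) *\<^sub>R y + (1/2) *\<^sub>R c)" by (rule c(2))
  also have "\<dots> \<le> (\<phi> y + \<phi> c) / 2 - (norm (y - c))\<^sup>2 / 4"
    using smc y(1) c(1) unfolding strongly_midpoint_convex_on_def by blast
  finally have "(norm (y - c))\<^sup>2 \<le> 0" using y(2) by argo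
  then show ?thesis by simp
qed

lemma metric_proj_exists:
  fixes A :: "'a::{real_inner,complete_space} set"
  assumes "closed A" "convex A" "A \<noteq> {}"
  shows "\<exists>p. p \<in> A \<and> (\<forall>y\<in>A. dist x p \<le> dist x y)"
proof -
  have smc: "strongly_midpoint_convex_on A (\<lambda>y. (norm (x - y))\<^sup>2)"
    unfolding strongly_midpoint_convex_on_def by (simp add: midpoint_sq_dist)
  have "continuous_on A (\<lambda>y. (norm (x - y))\<^sup>2)" by (intro continuous_intros)
  moreover have "bdd_below ((\<lambda>y. (norm (x - y))\<^sup>2) ` A)" by (auto intro: bdd_belowI[of _ 0])
  ultimately have "\<exists>c\<in>A. \<forall>y\<in>A. (norm (x - c))\<^sup>2 \<le> (norm (x - y))\<^sup>2"
    by (rule strongly_midpoint_convex_min_exists[OF smc assms(2,1,3)])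
  then show ?thesis by (auto simp: dist_norm)
qed

lemma
  fixes A :: "'a::{real_inner,complete_space} set"
  assumes "closed A" "convex A" "A \<noteq> {}"
  shows metric_proj_in: "metric_proj A x \<in> A"
    and metric_proj_nearest: "\<And>y. y \<in> A \<Longrightarrow> dist x (metric_proj A x) \<le> dist x y"
  using someI_ex[OF metric_proj_exists[OF assms, of x]] unfolding metric_proj_def by auto

lemma metric_proj_fixed:
  fixes A :: "'a::{real_inner,complete_space} set"
  assumes "closed A" "convex A" "x \<in> A"
  shows "metric_proj A x = x"
proof -
  have "dist x (metric_proj A x) \<le> dist x x"
    using metric_proj_nearest[OF assms(1,2) _ assms(3)] assms(3) by blast
  then show ?thesis by simp
qed

(* The metric projection is nonexpansive (from the obtuse-angle characterization). *)
lemma metric_proj_nonexpansive: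
  fixes A :: "'a::{real_inner,complete_space} set"
  assumes "closed A" "convex A" "A \<noteq> {}"
  shows "norm (metric_proj A x - metric_proj A y) \<le> norm (x - y)"
proof -
  note in_A = metric_proj_in[OF assms] and nearest = metric_proj_nearest[OF assms]
  have "inner (x - metric_proj A x) (metric_proj A y - metric_proj A x) \<le> 0"
    by (rule any_closest_point_dot[OF assms(2,1)]) (use in_A nearest in auto)
  moreover have "inner (y - metric_proj A y) (metric_proj A x - metric_proj A y) \<le> 0"
    by (rule any_closest_point_dot[OF assms(2,1)]) (use in_A nearest in auto)
  ultimately show ?thesis unfolding norm_le
    using inner_ge_zero[of "(x - metric_proj A x) - (y - metric_proj A y)"]
    by (simp add: inner_add inner_diff inner_commute)
qed

definition asym_fun :: "(nat \<Rightarrow> 'a::real_normed_vector) \<Rightarrow> 'a \<Rightarrow> real" where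
  "asym_fun x y = real_limsup (\<lambda>n. (norm (x n - y))\<^sup>2)"

lemma asym_Bseq:
  fixes x :: "nat \<Rightarrow> 'a::real_normed_vector"
  assumes bound: "\<And>n. norm (x n) \<le> R"
  shows "Bseq (\<lambda>n. (norm (x n - y))\<^sup>2)"
proof (rule BseqI')
  fix n
  have "norm (x n - y) \<le> R + norm y" using norm_triangle_ineq4[of "x n" y] bound[of n] by linarith
  then show "norm ((norm (x n - y))\<^sup>2) \<le> (R + norm y)\<^sup>2" by (simp add: power_mono)
qed

lemma asym_nonneg:
  fixes x :: "nat \<Rightarrow> 'a::real_normed_vector"
  assumes bound: "\<And>n. norm (x n) \<le> R"
  shows "0 \<le> asym_fun x y"
proof -
  have "real_limsup (\<lambda>n. 0) \<le> asym_fun x y"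
    unfolding asym_fun_def by (rule real_limsup_mono[OF Bfun_const asym_Bseq[of x R, OF bound]]) simp
  then show ?thesis using real_limsup_tendsto[OF tendsto_const] by simp
qed

(* The asymptotic function inherits strong midpoint convexity from the parallelogram law. *)
lemma asym_strongly_midpoint_convex:
  fixes x :: "nat \<Rightarrow> 'a::real_inner"
  assumes bound: "\<And>n. norm (x n) \<le> R"
  shows "strongly_midpoint_convex_on UNIV (asym_fun x)"
  unfolding strongly_midpoint_convex_on_def
proof (intro ballI)
  fix y z :: 'a
  have bs: "Bseq (\<lambda>n. (1/2) * (norm (x n - w))\<^sup>2)" for w
    by (rule Bseq_cmult_iff[THEN iffD2]) (simp_all add: asym_Bseq[of x R, OF bound])
  have "asym_fun x ((1/2) *\<^sub>R y + (1/2) *\<^sub>R z)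
      = real_limsup (\<lambda>n. (1/2) * (norm (x n - y))\<^sup>2
          + ((1/2) * (norm (x n - z))\<^sup>2 + - (norm (y - z))\<^sup>2 / 4))"
    unfolding asym_fun_def midpoint_sq_dist by (simp add: algebra_simps)
  also have "\<dots> \<le> real_limsup (\<lambda>n. (1/2) * (norm (x n - y))\<^sup>2)
      + (real_limsup (\<lambda>n. (1/2) * (norm (x n - z))\<^sup>2) + - (norm (y - z))\<^sup>2 / 4)"
    using real_limsup_add[OF bs[of y] Bseq_add[OF bs[of z], of "- (norm (y - z))\<^sup>2 / 4"]]
      real_limsup_add_const[OF bs[of z], of "- (norm (y - z))\<^sup>2 / 4"] by linarith
  also have "\<dots> = (asym_fun x y + asym_fun x z) / 2 - (norm (y - z))\<^sup>2 / 4"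
    unfolding asym_fun_def using real_limsup_cmult[OF asym_Bseq[of x R, OF bound], of "1/2"] by simp
  finally show "asym_fun x ((1/2) *\<^sub>R y + (1/2) *\<^sub>R z)
      \<le> (asym_fun x y + asym_fun x z) / 2 - (norm (y - z))\<^sup>2 / 4" .
qed

lemma sq_norm_le_shift:
  fixes u v :: "'a::real_normed_vector"
  assumes "norm u \<le> norm v + e" "0 \<le> e" "norm v \<le> K"
  shows "(norm u)\<^sup>2 \<le> (norm v)\<^sup>2 + e * (2 * K + e)"
proof -
  have "(norm u)\<^sup>2 \<le> (norm v + e)\<^sup>2" using assms(1) by (simp add: power_mono)
  also have "\<dots> = (norm v)\<^sup>2 + e * (2 * norm v + e)" by (simp add: power2_eq_square algebra_simps)
  also have "\<dots> \<le> (norm v)\<^sup>2 + e * (2 * K + e)" using assms(2,3) by (simp add: mult_left_mono)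
  finally show ?thesis .
qed

lemma asym_shift:
  fixes x :: "nat \<Rightarrow> 'a::real_normed_vector"
  assumes bound: "\<And>n. norm (x n) \<le> R"
    and near: "\<And>n. norm (x n - v) \<le> norm (x n - y) + e n" and e0: "\<And>n. 0 \<le> e n"
    and lim: "e \<longlonglongrightarrow> \<epsilon>"
  shows "asym_fun x v \<le> asym_fun x y + \<epsilon> * (2 * (R + norm y) + \<epsilon>)"
proof -
  define b where "b n = e n * (2 * (R + norm y) + e n)" for n
  have b_lim: "b \<longlonglongrightarrow> \<epsilon> * (2 * (R + norm y) + \<epsilon>)" unfolding b_def by (intro tendsto_intros lim)
  have "(norm (x n - v))\<^sup>2 \<le> (norm (x n - y))\<^sup>2 + b n" for n
    unfolding b_def
    by (rule sq_norm_le_shift[OF near e0]) (use norm_triangle_ineq4[of "x n" y] bound[of n] in linarith)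
  then have "asym_fun x v \<le> real_limsup (\<lambda>n. (norm (x n - y))\<^sup>2 + b n)"
    unfolding asym_fun_def
    by (intro real_limsup_mono asym_Bseq[of x R, OF bound] Bseq_add_seq convergent_imp_Bseq convergentI[OF b_lim])
  also have "\<dots> \<le> asym_fun x y + real_limsup b"
    unfolding asym_fun_def
    by (intro real_limsup_add asym_Bseq[of x R, OF bound] convergent_imp_Bseq convergentI[OF b_lim])
  finally show ?thesis using real_limsup_tendsto[OF b_lim] by simp
qed

lemma asym_dist_bound:
  fixes x :: "nat \<Rightarrow> 'a::real_normed_vector"
  assumes bound: "\<And>n. norm (x n) \<le> R"
  shows "asym_fun x v \<le> asym_fun x y + dist v y * (2 * (R + norm y) + dist v y)"
proof (rule asym_shift[OF bound])
  show "norm (x n - v) \<le> norm (x n - y) + dist v y" for n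
    using norm_triangle_ineq[of "x n - y" "y - v"] by (simp add: dist_norm norm_minus_commute)
qed simp_all

lemma asym_continuous:
  fixes x :: "nat \<Rightarrow> 'a::real_normed_vector"
  assumes bound: "\<And>n. norm (x n) \<le> R"
  shows "continuous_on UNIV (asym_fun x)"
  unfolding continuous_on_def
proof
  fix z :: 'a
  let ?\<phi> = "asym_fun x"
  have "(?\<phi> \<longlongrightarrow> ?\<phi> z) (at z)"
  proof (rule tendsto_sandwich)
    show "\<forall>\<^sub>F y in at z. ?\<phi> z - dist z y * (2 * (R + norm y) + dist z y) \<le> ?\<phi> y"
      using asym_dist_bound[of x R z] bound by (auto intro!: always_eventually simp: algebra_simps)
    show "\<forall>\<^sub>F y in at z. ?\<phi> y \<le> ?\<phi> z + dist y z * (2 * (R + norm z) + dist y z)"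
      using asym_dist_bound[of x R _ z] bound by (auto intro!: always_eventually)
    have "((\<lambda>y. ?\<phi> z - dist z y * (2 * (R + norm y) + dist z y))
        \<longlongrightarrow> ?\<phi> z - dist z z * (2 * (R + norm z) + dist z z)) (at z)"
      by (intro tendsto_intros)
    then show "((\<lambda>y. ?\<phi> z - dist z y * (2 * (R + norm y) + dist z y)) \<longlongrightarrow> ?\<phi> z) (at z)" by simp
    have "((\<lambda>y. ?\<phi> z + dist y z * (2 * (R + norm z) + dist y z))
        \<longlongrightarrow> ?\<phi> z + dist z z * (2 * (R + norm z) + dist z z)) (at z)"
      by (intro tendsto_intros)
    then show "((\<lambda>y. ?\<phi> z + dist y z * (2 * (R + norm z) + dist y z)) \<longlongrightarrow> ?\<phi> z) (at z)" by simp
  qed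
  then show "(?\<phi> \<longlongrightarrow> ?\<phi> z) (at z within UNIV)" by simp
qed

lemma asym_nonexpansive_decrease:
  fixes x :: "nat \<Rightarrow> 'a::real_normed_vector" and S :: "'a \<Rightarrow> 'a"
  assumes bound: "\<And>n. norm (x n) \<le> R"
    and nonexp: "\<And>u v. norm (S u - S v) \<le> norm (u - v)"
    and approx: "(\<lambda>n. norm (S (x n) - x n)) \<longlonglongrightarrow> 0"
  shows "asym_fun x (S y) \<le> asym_fun x y"
proof -
  have "asym_fun x (S y) \<le> asym_fun x y + 0 * (2 * (R + norm y) + 0)"
  proof (rule asym_shift[OF bound _ _ approx])
    fix n
    have "norm (x n - S y) \<le> norm (x n - S (x n)) + norm (S (x n) - S y)"
      using norm_triangle_ineq[of "x n - S (x n)" "S (x n) - S y"] by simp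
    then show "norm (x n - S y) \<le> norm (x n - y) + norm (S (x n) - x n)"
      using nonexp[of "x n" y] by (simp add: norm_minus_commute)
  qed simp
  then show ?thesis by simp
qed

lemma asym_center:
  fixes x :: "nat \<Rightarrow> 'a::{real_inner,complete_space}"
  assumes bound: "\<And>n. norm (x n) \<le> R"
  obtains c where "\<And>y. asym_fun x c \<le> asym_fun x y"
    and "\<And>y. asym_fun x y \<le> asym_fun x c \<Longrightarrow> y = c"
proof -
  have smc: "strongly_midpoint_convex_on UNIV (asym_fun x)"
    using bound by (rule asym_strongly_midpoint_convex)
  have "continuous_on UNIV (asym_fun x)" using bound by (rule asym_continuous)
  moreover have "bdd_below (range (asym_fun x))"
    using asym_nonneg[of x R] bound by (auto intro: bdd_belowI[of _ 0])
  ultimately obtain c where c: "\<And>y. asym_fun x c \<le> asym_fun x y"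
    using strongly_midpoint_convex_min_exists[OF smc convex_UNIV closed_UNIV UNIV_not_empty] by blast
  moreover have "y = c" if "asym_fun x y \<le> asym_fun x c" for y
    using strongly_midpoint_convex_min_unique[OF smc convex_UNIV _ c] that by simp
  ultimately show ?thesis using that by blast
qed

(* The asymptotic centre c is fixed by S and by the projection onto C, by strictness. *)
lemma nonexpansive_approx_fixed_point:
  fixes S :: "'a::{real_inner,complete_space} \<Rightarrow> 'a" and x :: "nat \<Rightarrow> 'a"
  assumes nonexp: "\<And>u v. norm (S u - S v) \<le> norm (u - v)"
    and C: "closed C" "convex C" and xC: "\<And>n. x n \<in> C" and bound: "\<And>n. norm (x n) \<le> R"
    and approx: "(\<lambda>n. norm (S (x n) - x n)) \<longlonglongrightarrow> 0"
  shows "\<exists>c\<in>C. S c = c"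
proof -
  obtain c where center_unique: "\<And>y. asym_fun x y \<le> asym_fun x c \<Longrightarrow> y = c"
    using asym_center[of x R] bound by metis
  have "S c = c"
    using center_unique asym_nonexpansive_decrease[of x R S, OF bound nonexp approx] by blast
  moreover have "metric_proj C c = c"
  proof (rule center_unique, rule asym_nonexpansive_decrease[of x R, OF bound])
    have ne: "C \<noteq> {}" using xC by blast
    show "norm (metric_proj C u - metric_proj C v) \<le> norm (u - v)" for u v
      using metric_proj_nonexpansive[OF C ne] .
    show "(\<lambda>n. norm (metric_proj C (x n) - x n)) \<longlonglongrightarrow> 0"
      using metric_proj_fixed[OF C xC] by simp
  qed
  then have "c \<in> C" using metric_proj_in[OF C, of c] xC by (metis empty_iff)
  ultimately show ?thesis by blast
qed

lemma closed_fixed_point_parameters: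
  fixes T :: "real \<Rightarrow> 'a::{real_inner,complete_space} \<Rightarrow> 'a"
  assumes I: "closed I"
    and nonexp: "\<And>\<alpha> u v. \<alpha> \<in> I \<Longrightarrow> norm (T \<alpha> u - T \<alpha> v) \<le> norm (u - v)"
    and lip: "\<And>\<alpha> \<beta> x. \<alpha> \<in> I \<Longrightarrow> \<beta> \<in> I \<Longrightarrow> norm x \<le> r \<Longrightarrow>
                norm (T \<beta> x - T \<alpha> x) \<le> L * \<bar>\<beta> - \<alpha>\<bar>"
  shows "closed {\<alpha> \<in> I. \<exists>x. T \<alpha> x = x \<and> norm x \<le> r}"
  unfolding closed_sequential_limits
proof (intro allI impI, elim conjE)
  fix as :: "nat \<Rightarrow> real" and a
  assume mem: "\<forall>n. as n \<in> {\<alpha> \<in> I. \<exists>x. T \<alpha> x = x \<and> norm x \<le> r}" and lim: "as \<longlonglongrightarrow> a"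
  have asI: "\<And>n. as n \<in> I" using mem by auto
  have aI: "a \<in> I" using closed_sequentially[of I as a] I asI lim by blast
  have "\<forall>n. \<exists>x. T (as n) x = x \<and> norm x \<le> r" using mem by simp
  then obtain x where fixed: "\<And>n. T (as n) (x n) = x n" and bound: "\<And>n. norm (x n) \<le> r"
    by metis
  have "(\<lambda>n. norm (T a (x n) - x n)) \<longlonglongrightarrow> 0"
  proof (rule tendsto_sandwich[of "\<lambda>n. 0" _ _ "\<lambda>n. L * \<bar>a - as n\<bar>"])
    have "norm (T a (x n) - x n) \<le> L * \<bar>a - as n\<bar>" for n
      using lip[of "as n" a "x n"] asI[of n] aI bound[of n] fixed[of n] by simp
    then show "\<forall>\<^sub>F n in sequentially. norm (T a (x n) - x n) \<le> L * \<bar>a - as n\<bar>"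
      by simp
    have "(\<lambda>n. L * \<bar>a - as n\<bar>) \<longlonglongrightarrow> L * \<bar>a - a\<bar>" by (intro tendsto_intros lim)
    then show "(\<lambda>n. L * \<bar>a - as n\<bar>) \<longlonglongrightarrow> 0" by simp
  qed simp_all
  moreover have "\<And>n. x n \<in> cball 0 r" using bound by simp
  ultimately have "\<exists>c\<in>cball 0 r. T a c = c"
    using nonexpansive_approx_fixed_point[of "T a" "cball 0 r" x r] nonexp[OF aI] bound by blast
  then obtain c where "c \<in> cball 0 r" "T a c = c" ..
  then show "a \<in> {\<alpha> \<in> I. \<exists>x. T \<alpha> x = x \<and> norm x \<le> r}" using aI by auto
qed

(* Relaxed projections are nonexpansive, as convex combinations of nonexpansive maps. *)
lemma relaxed_proj_nonexpansive:
  fixes A :: "'a::{real_inner,complete_space} set"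
  assumes A: "closed A" "convex A" "A \<noteq> {}" and \<alpha>: "0 \<le> \<alpha>" "\<alpha> \<le> 1"
  shows "norm (relaxed_proj A \<alpha> x - relaxed_proj A \<alpha> y) \<le> norm (x - y)"
proof -
  have "relaxed_proj A \<alpha> x - relaxed_proj A \<alpha> y
      = \<alpha> *\<^sub>R (metric_proj A x - metric_proj A y) + (1 - \<alpha>) *\<^sub>R (x - y)"
    unfolding relaxed_proj_def by (simp add: algebra_simps)
  then have "norm (relaxed_proj A \<alpha> x - relaxed_proj A \<alpha> y)
      \<le> \<alpha> * norm (metric_proj A x - metric_proj A y) + (1 - \<alpha>) * norm (x - y)"
    using norm_triangle_ineq[of "\<alpha> *\<^sub>R (metric_proj A x - metric_proj A y)" "(1 - \<alpha>) *\<^sub>R (x - y)"] \<alpha>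
    by simp
  also have "\<dots> \<le> \<alpha> * norm (x - y) + (1 - \<alpha>) * norm (x - y)"
    using metric_proj_nonexpansive[OF A] \<alpha> by (simp add: mult_left_mono)
  finally show ?thesis by (simp add: algebra_simps)
qed

lemma relaxed_proj_norm_le:
  fixes A :: "'a::{real_inner,complete_space} set"
  assumes A: "closed A" "convex A" "A \<noteq> {}" and \<beta>: "0 \<le> \<beta>" "\<beta> \<le> 1"
  shows "norm (relaxed_proj A \<beta> u) \<le> norm u + norm (metric_proj A 0)"
proof -
  have "norm (relaxed_proj A \<beta> u)
      \<le> norm (relaxed_proj A \<beta> u - relaxed_proj A \<beta> 0) + norm (relaxed_proj A \<beta> 0)"
    using norm_triangle_ineq[of "relaxed_proj A \<beta> u - relaxed_proj A \<beta> 0" "relaxed_proj A \<beta> 0"]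
    by simp
  also have "\<dots> \<le> norm u + \<beta> * norm (metric_proj A 0)"
    using relaxed_proj_nonexpansive[OF A \<beta>, of u 0] \<beta> by (simp add: relaxed_proj_def)
  also have "\<dots> \<le> norm u + norm (metric_proj A 0)"
    using \<beta> by (simp add: mult_left_le_one_le)
  finally show ?thesis .
qed

lemma relaxed_proj_param_diff:
  fixes A :: "'a::{real_inner,complete_space} set"
  assumes A: "closed A" "convex A" "A \<noteq> {}"
  shows "norm (relaxed_proj A \<beta> u - relaxed_proj A \<alpha> u)
           \<le> \<bar>\<beta> - \<alpha>\<bar> * (2 * norm u + norm (metric_proj A 0))"
proof -
  have "norm (metric_proj A u - u) \<le> norm (metric_proj A u - metric_proj A 0) + norm (metric_proj A 0) + norm u"
    using norm_triangle_ineq4[of "metric_proj A u - metric_proj A 0" "u - metric_proj A 0"]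
      norm_triangle_ineq4[of u "metric_proj A 0"] by simp
  also have "\<dots> \<le> 2 * norm u + norm (metric_proj A 0)"
    using metric_proj_nonexpansive[OF A, of u 0] by simp
  finally have "norm (metric_proj A u - u) \<le> 2 * norm u + norm (metric_proj A 0)" .
  moreover have "relaxed_proj A \<beta> u - relaxed_proj A \<alpha> u = (\<beta> - \<alpha>) *\<^sub>R (metric_proj A u - u)"
    unfolding relaxed_proj_def by (simp add: algebra_simps)
  ultimately show ?thesis by (simp add: mult_left_mono)
qed

lemma relaxed_comp_nonexpansive:
  fixes A :: "nat \<Rightarrow> 'a::{real_inner,complete_space} set"
  assumes A: "\<And>i. i \<in> {1..n} \<Longrightarrow> closed (A i) \<and> convex (A i) \<and> A i \<noteq> {}"
    and \<alpha>: "0 \<le> \<alpha>" "\<alpha> \<le> 1"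
  shows "norm (relaxed_comp A n \<alpha> x - relaxed_comp A n \<alpha> y) \<le> norm (x - y)"
  using A
proof (induction n)
  case (Suc n)
  have "norm (relaxed_comp A (Suc n) \<alpha> x - relaxed_comp A (Suc n) \<alpha> y)
     \<le> norm (relaxed_comp A n \<alpha> x - relaxed_comp A n \<alpha> y)"
    using relaxed_proj_nonexpansive[of "A (Suc n)" \<alpha>] Suc.prems[of "Suc n"] \<alpha> by simp
  also have "\<dots> \<le> norm (x - y)" using Suc by simp
  finally show ?case .
qed simp

lemma relaxed_comp_norm_le:
  fixes A :: "nat \<Rightarrow> 'a::{real_inner,complete_space} set"
  assumes A: "\<And>i. i \<in> {1..n} \<Longrightarrow> closed (A i) \<and> convex (A i) \<and> A i \<noteq> {}"
    and \<beta>: "0 \<le> \<beta>" "\<beta> \<le> 1"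
  shows "norm (relaxed_comp A n \<beta> x) \<le> norm x + (\<Sum>i=1..n. norm (metric_proj (A i) 0))"
  using A
proof (induction n)
  case (Suc n)
  have "norm (relaxed_comp A (Suc n) \<beta> x)
      \<le> norm (relaxed_comp A n \<beta> x) + norm (metric_proj (A (Suc n)) 0)"
    using relaxed_proj_norm_le[of "A (Suc n)" \<beta>] Suc.prems[of "Suc n"] \<beta> by simp
  also have "\<dots> \<le> norm x + (\<Sum>i=1..Suc n. norm (metric_proj (A i) 0))"
    using Suc by simp
  finally show ?case .
qed simp

lemma relaxed_comp_param_lipschitz:
  fixes A :: "nat \<Rightarrow> 'a::{real_inner,complete_space} set"
  assumes "\<And>i. i \<in> {1..n} \<Longrightarrow> closed (A i) \<and> convex (A i) \<and> A i \<noteq> {}"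
  shows "\<exists>L. \<forall>\<alpha>\<in>{0..1}. \<forall>\<beta>\<in>{0..1}. \<forall>x. norm x \<le> r \<longrightarrow>
           norm (relaxed_comp A n \<beta> x - relaxed_comp A n \<alpha> x) \<le> L * \<bar>\<beta> - \<alpha>\<bar>"
  using assms
proof (induction n)
  case 0
  show ?case by (intro exI[of _ 0]) simp
next
  case (Suc n)
  have A: "closed (A (Suc n))" "convex (A (Suc n))" "A (Suc n) \<noteq> {}"
    using Suc.prems[of "Suc n"] by auto
  obtain L where L: "\<forall>\<alpha>\<in>{0..1}. \<forall>\<beta>\<in>{0..1}. \<forall>x. norm x \<le> r \<longrightarrow>
      norm (relaxed_comp A n \<beta> x - relaxed_comp A n \<alpha> x) \<le> L * \<bar>\<beta> - \<alpha>\<bar>"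
    using Suc by force
  define B where "B = r + (\<Sum>i=1..n. norm (metric_proj (A i) 0))"
  define K where "K = 2 * B + norm (metric_proj (A (Suc n)) 0)"
  have "norm (relaxed_comp A (Suc n) \<beta> x - relaxed_comp A (Suc n) \<alpha> x) \<le> (K + L) * \<bar>\<beta> - \<alpha>\<bar>"
    if \<alpha>: "\<alpha> \<in> {0..1}" and \<beta>: "\<beta> \<in> {0..1}" and x: "norm x \<le> r" for \<alpha> \<beta> x
  proof -
    define u where "u = relaxed_comp A n \<beta> x"
    define v where "v = relaxed_comp A n \<alpha> x"
    have "norm u \<le> B"
      using relaxed_comp_norm_le[of n A \<beta> x] Suc.prems \<beta> x unfolding u_def B_def by fastforce
    then have "2 * norm u + norm (metric_proj (A (Suc n)) 0) \<le> K" unfolding K_def by simp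
    then have "norm (relaxed_proj (A (Suc n)) \<beta> u - relaxed_proj (A (Suc n)) \<alpha> u) \<le> \<bar>\<beta> - \<alpha>\<bar> * K"
      using relaxed_proj_param_diff[OF A, of \<beta> u \<alpha>] by (meson abs_ge_zero mult_left_mono order_trans)
    moreover have "norm (relaxed_proj (A (Suc n)) \<alpha> u - relaxed_proj (A (Suc n)) \<alpha> v) \<le> L * \<bar>\<beta> - \<alpha>\<bar>"
      using relaxed_proj_nonexpansive[OF A, of \<alpha> u v] L \<alpha> \<beta> x unfolding u_def v_def by force
    ultimately show ?thesis
      using norm_triangle_ineq[of "relaxed_proj (A (Suc n)) \<beta> u - relaxed_proj (A (Suc n)) \<alpha> u"
          "relaxed_proj (A (Suc n)) \<alpha> u - relaxed_proj (A (Suc n)) \<alpha> v"]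
      unfolding u_def v_def by (simp add: algebra_simps)
  qed
  then show ?case by blast
qed

theorem proposition3:
  fixes A :: "nat \<Rightarrow> 'a::{real_inner,complete_space} set"
    and k :: nat and r :: real
  assumes "k \<ge> 1"
    and "\<And>i. i \<in> {1..k} \<Longrightarrow> A i \<noteq> {}"
    and "\<And>i. i \<in> {1..k} \<Longrightarrow> convex (A i)"
    and "\<And>i. i \<in> {1..k} \<Longrightarrow> closed (A i)"
    and "r > 0"
  shows "closedin (top_of_set {0..1})
           {\<alpha> \<in> {0..1}. \<exists>x. relaxed_comp A k \<alpha> x = x \<and> norm x \<le> r}"
proof (rule closed_subset)
  have A: "\<And>i. i \<in> {1..k} \<Longrightarrow> closed (A i) \<and> convex (A i) \<and> A i \<noteq> {}"
    using assms(2-4) by blast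
  obtain L where "\<forall>\<alpha>\<in>{0..1}. \<forall>\<beta>\<in>{0..1}. \<forall>x. norm x \<le> r \<longrightarrow>
      norm (relaxed_comp A k \<beta> x - relaxed_comp A k \<alpha> x) \<le> L * \<bar>\<beta> - \<alpha>\<bar>"
    using relaxed_comp_param_lipschitz[where A = A and n = k and r = r, OF A] by blast
  moreover have "\<And>\<alpha> u v. \<alpha> \<in> {0..1} \<Longrightarrow>
      norm (relaxed_comp A k \<alpha> u - relaxed_comp A k \<alpha> v) \<le> norm (u - v)"
    using relaxed_comp_nonexpansive[where A = A and n = k, OF A] by simp
  ultimately show "closed {\<alpha> \<in> {0..1}. \<exists>x. relaxed_comp A k \<alpha> x = x \<and> norm x \<le> r}"
    by (intro closed_fixed_point_parameters[where L = L]) auto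
qed auto

end
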